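(* Under the standing setup below (including the initialisation assumptions and $\|\mathbf{X}\|_2\le R$), there is a constant $C>0$ depending only on $N,d,d_v,K,\epsilon,R$ (not on $\alpha$ or $\mathbf{X}$) such that for every $\alpha>0$ and every $\mathbf{X}\in\mathbb{R}^{N\times d}$ with $\|\mathbf{X}\|_2\le R$ and $\mathbf{M}\neq0$, $$\|\mathbf{J}_1(\mathbf{X})\|_2\le C\alpha,\qquad \mathbf{J}_1(\mathbf{X})=(\mathbf{X}\mathbf{W}^V\mathbf{W}^O\otimes\mathbf{I}_N)^\top\frac{\partial\,\mathrm{vec}\,\mathbf{A}(\mathbf{X})}{\partial\,\mathrm{vec}\,\mathbf{X}}.$$
   Context: Standing setup. Fix integers $N,d,d_v\ge1$ with $2d_v\le d$ and $2d_v\le N$, an integer $K\ge0$ (number of Newton–Schulz iterations), $\epsilon>0$, $R>0$ and a scalar $\alpha>0$. For $\mathbf{X}\in\mathbb{R}^{N\times d}$ and weights $\mathbf{W}^Q,\mathbf{W}^K\in\mathbb{R}^{d\times d_v}$, set $\mathbf{Q}=\mathbf{X}\mathbf{W}^Q$, $\mathbf{K}=\mathbf{X}\mathbf{W}^K$, $\mathbf{M}=[\mathbf{Q},\mathbf{K}]\in\mathbb{R}^{N\times 2d_v}$, $\mathbf{M}_0=\mathbf{M}/(\|\mathbf{M}\|_F+\epsilon)$, $\mathbf{M}_{k+1}=\frac12\mathbf{M}_k(3\mathbf{I}_{2d_v}-\mathbf{M}_k^\top\mathbf{M}_k)$, and $\mathbf{B}=\mathbf{M}_K$. Let $\mathbf{S}=\frac{\alpha}{\sqrt{d_v}}(\mathbf{Q}\mathbf{K}^\top-\mathbf{K}\mathbf{Q}^\top)$,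 $[\mathbf{S}]=\mathbf{B}^\top\mathbf{S}\mathbf{B}\in\mathbb{R}^{2d_v\times2d_v}$, $\mathbf{A}(\mathbf{X})=\mathbf{I}_N+\mathbf{B}(\exp([\mathbf{S}])-\mathbf{I}_{2d_v})\mathbf{B}^\top$, and $\mathrm{OSA}(\mathbf{X})=\mathbf{A}(\mathbf{X})\mathbf{X}\mathbf{W}^V\mathbf{W}^O$ with $\mathbf{W}^V\in\mathbb{R}^{d\times d_v}$, $\mathbf{W}^O\in\mathbb{R}^{d_v\times d}$. Initialisation assumptions: $[\mathbf{W}^Q,\mathbf{W}^K]$ has orthonormal columns, and $\mathbf{W}^V$ and $(\mathbf{W}^O)^\top$ each have orthonormal columns. $\|\cdot\|_2$ is the spectral norm, $\|\cdot\|_F$ the Frobenius norm, $\mathrm{vec}$ column-major vectorisation, $\otimes$ the Kronecker product, and $\partial\,\mathrm{vec}\,F/\partial\,\mathrm{vec}\,\mathbf{X}$ the Jacobian of the vectorised map. *)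

theory Defs
  imports "HOL-Analysis.Analysis"
begin

text \<open>Matrices are rendered as HOL-Analysis nested vectors: an m x n real matrix
  is an element of real^'n^'m (row index of type 'm, column index of type 'n).
  The dimensions N, d, d_v are the cardinalities of finite types 'N, 'd, 'v;
  the dimension 2 d_v is rendered by the sum type 'v + 'v (columns Inl j belong
  to the first block, Inr j to the second block).\<close>

definition spec_norm :: "real^'n^'m \<Rightarrow> real" where
  "spec_norm A = onorm (\<lambda>x. A *v x)"

definition frob_norm :: "real^'n^'m \<Rightarrow> real" where
  "frob_norm A = sqrt (\<Sum>i\<in>UNIV. \<Sum>j\<in>UNIV. (A $ i $ j)^2)"

primrec mat_pow :: "real^'n^'n \<Rightarrow> nat \<Rightarrow> real^'n^'n" where
  "mat_pow A 0 = mat 1"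
| "mat_pow A (Suc k) = A ** mat_pow A k"

definition mat_exp :: "real^'n^'n \<Rightarrow> real^'n^'n" where
  "mat_exp A = (\<Sum>k. (1 / fact k) *\<^sub>R mat_pow A k)"

definition hcat :: "real^'b^'m \<Rightarrow> real^'c^'m \<Rightarrow> real^('b + 'c)^'m" where
  "hcat P Q = (\<chi> i j. case j of Inl a \<Rightarrow> P $ i $ a | Inr b \<Rightarrow> Q $ i $ b)"

text \<open>Column-major vectorisation: the entry in row i and column j goes to
  index (j, i); pairs are ordered lexicographically, so this is the usual
  column-major order.\<close>
definition vecm :: "real^'n^'m \<Rightarrow> real^('n \<times> 'm)" where
  "vecm A = (\<chi> p. A $ snd p $ fst p)"

definition unvecm :: "real^('n \<times> 'm) \<Rightarrow> real^'n^'m" where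
  "unvecm v = (\<chi> i j. v $ (j, i))"

text \<open>Kronecker product, with row/column indices (outer, inner).\<close>
definition kron :: "real^'b^'a \<Rightarrow> real^'d^'c \<Rightarrow> real^('b \<times> 'd)^('a \<times> 'c)" where
  "kron A B = (\<chi> p q. A $ fst p $ fst q * B $ snd p $ snd q)"

definition ns_step :: "real^'n^'m \<Rightarrow> real^'n^'m" where
  "ns_step M = (1/2) *\<^sub>R (M ** (3 *\<^sub>R mat 1 - transpose M ** M))"

definition OSA_B :: "real \<Rightarrow> nat \<Rightarrow> real^(('v::finite) + 'v)^('d::finite) \<Rightarrow> real^'d^('N::finite) \<Rightarrow> real^('v + 'v)^'N" where
  "OSA_B \<epsilon> K WQK X =
     (let M = X ** WQK; M0 = (1 / (frob_norm M + \<epsilon>)) *\<^sub>R M in (ns_step ^^ K) M0)"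

definition OSA_A :: "real \<Rightarrow> nat \<Rightarrow> real \<Rightarrow> real^('v::finite)^('d::finite) \<Rightarrow> real^'v^'d \<Rightarrow> real^'d^('N::finite) \<Rightarrow> real^'N^'N" where
  "OSA_A \<epsilon> K \<alpha> WQ WK X =
     (let Q = X ** WQ; Kk = X ** WK;
          B = OSA_B \<epsilon> K (hcat WQ WK) X;
          S = (\<alpha> / sqrt (real CARD('v))) *\<^sub>R (Q ** transpose Kk - Kk ** transpose Q);
          Sb = transpose B ** S ** B
      in mat 1 + B ** (mat_exp Sb - mat 1) ** transpose B)"

definition OSA_J1 :: "real \<Rightarrow> nat \<Rightarrow> real \<Rightarrow> real^('v::finite)^('d::finite) \<Rightarrow> real^'v^'d \<Rightarrow> real^'v^'d \<Rightarrow> real^'d^'v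
    \<Rightarrow> real^'d^('N::finite) \<Rightarrow> real^('d \<times> 'N)^('d \<times> 'N)" where
  "OSA_J1 \<epsilon> K \<alpha> WQ WK WV WO X =
     transpose (kron (X ** WV ** WO) (mat 1 :: real^'N^'N))
     ** jacobian (\<lambda>v. vecm (OSA_A \<epsilon> K \<alpha> WQ WK (unvecm v))) (at (vecm X))"

end

theory Submission
  imports Defs
begin

(* The exponential of a skew-symmetric matrix is orthogonal, and on skew-symmetric matrices
   the exponential is 1-Lipschitz for the Frobenius norm.  The compressed score [S] is
   skew-symmetric and proportional to alpha, while the normalisation and the Newton--Schulz
   iterations are Lipschitz and bounded on bounded sets.  Hence A is Lipschitz on every ball
   with a constant alpha * c, where c does not depend on the (orthonormal) weights.  The
   operator norm of a derivative is bounded by a local Lipschitz constant, and the Kronecker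
   factor is bounded through Frobenius norms. *)

section \<open>Frobenius norm of matrices\<close>

lemma norm_vec_squared: "norm (x::'a::real_normed_vector^'n) ^ 2 = (\<Sum>i\<in>UNIV. norm (x $ i) ^ 2)"
  unfolding norm_vec_def L2_set_def by (simp add: sum_nonneg)

lemma norm_matrix_squared: "norm (A::real^'n^'m) ^ 2 = (\<Sum>i\<in>UNIV. \<Sum>j\<in>UNIV. (A $ i $ j) ^ 2)"
  by (simp add: norm_vec_squared)

lemma frob_norm_eq_norm: "frob_norm A = norm A"
  unfolding frob_norm_def norm_matrix_squared[symmetric] by simp

lemma norm_matrix_vector_mult_le: "norm ((A::real^'n^'m) *v x) \<le> norm A * norm x"
proof -
  have "norm (A *v x) ^ 2 = (\<Sum>i\<in>UNIV. (A $ i \<bullet> x) ^ 2)"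
    by (simp add: norm_vec_squared matrix_mult_dot)
  also have "\<dots> \<le> (\<Sum>i\<in>UNIV. (norm (A $ i) * norm x) ^ 2)"
    by (intro sum_mono iffD1[OF abs_le_square_iff]) (simp add: Cauchy_Schwarz_ineq2)
  also have "\<dots> = (norm A * norm x) ^ 2"
    by (simp add: power_mult_distrib sum_distrib_right norm_vec_squared[of A])
  finally show ?thesis by (rule power2_le_imp_le) simp
qed

lemma norm_transpose: "norm (transpose (A::real^'n^'m)) = norm A"
proof -
  have "norm (transpose A) ^ 2 = norm A ^ 2"
    unfolding norm_matrix_squared transpose_def by (simp, rule sum.swap)
  then show ?thesis by (simp add: power2_eq_iff_nonneg)
qed

lemma row_matrix_mult: "((A::real^'n^'m) ** B) $ i = transpose B *v (A $ i)"
  by (simp add: matrix_matrix_mult_def matrix_vector_mult_def transpose_def vec_eq_iff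
      mult.commute[of "A $ i $ _"])

lemma norm_matrix_mult_le: "norm ((A::real^'n^'m) ** (B::real^'k^'n)) \<le> norm A * norm B"
proof -
  have "norm (A ** B) ^ 2 = (\<Sum>i\<in>UNIV. norm (transpose B *v A $ i) ^ 2)"
    by (simp add: norm_vec_squared row_matrix_mult)
  also have "\<dots> \<le> (\<Sum>i\<in>UNIV. (norm B * norm (A $ i)) ^ 2)"
    by (intro sum_mono power_mono order_trans[OF norm_matrix_vector_mult_le])
      (simp_all add: norm_transpose)
  also have "\<dots> = (norm A * norm B) ^ 2"
    by (simp add: power_mult_distrib sum_distrib_left norm_vec_squared[of A] mult.commute)
  finally show ?thesis by (rule power2_le_imp_le) simp
qed

lemma matrix_add_rdistrib: "((A::real^'n^'m) + B) ** C = A ** C + B ** C"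
  by (simp add: matrix_matrix_mult_def vec_eq_iff sum.distrib algebra_simps)

interpretation matrix_mult: bounded_bilinear "(**) :: real^'n^'m \<Rightarrow> real^'k^'n \<Rightarrow> real^'k^'m"
proof
  show "\<exists>K. \<forall>A B. norm (A ** B) \<le> norm (A::real^'n^'m) * norm (B::real^'k^'n) * K"
    using norm_matrix_mult_le by (intro exI[of _ 1]) auto
qed (simp_all add: matrix_add_ldistrib matrix_add_rdistrib matrix_scalar_ac scalar_matrix_assoc)

lemma bounded_linear_transpose: "bounded_linear (transpose :: real^'n^'m \<Rightarrow> real^'m^'n)"
  by (rule bounded_linear_intro[of _ 1])
    (simp_all add: transpose_scalar norm_transpose, simp add: transpose_def vec_eq_iff)

lemmas transpose_diff = linear_diff[OF bounded_linear.linear[OF bounded_linear_transpose]]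
lemmas transpose_zero = linear_0[OF bounded_linear.linear[OF bounded_linear_transpose]]

lemma norm_orthonormal_columns:
  assumes "transpose W ** W = mat 1"
  shows "norm (W::real^'n^'m) = sqrt CARD('n)"
proof -
  have "norm W ^ 2 = (\<Sum>j\<in>UNIV. (transpose W ** W) $ j $ j)"
    unfolding norm_matrix_squared
    by (simp add: matrix_matrix_mult_def transpose_def power2_eq_square, rule sum.swap)
  also have "\<dots> = CARD('n)" using assms by (simp add: mat_def)
  finally show ?thesis by (simp add: real_sqrt_unique)
qed

lemma norm_orthogonal_matrix_vector_mult:
  "orthogonal_matrix Q \<Longrightarrow> norm ((Q::real^'n^'n) *v x) = norm x"
  using orthogonal_transformation_matrix[of "\<lambda>x. Q *v x"]
  by (simp add: orthogonal_transformation_norm)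

lemma norm_matrix_mult_orthogonal:
  assumes "orthogonal_matrix Q"
  shows "norm ((A::real^'n^'m) ** Q) = norm A"
  using norm_orthogonal_matrix_vector_mult[of "transpose Q"] assms
  by (simp add: norm_vec_def row_matrix_mult orthogonal_matrix_transpose
      del: transpose_matrix_vector)

lemma norm_orthogonal_matrix_mult:
  assumes "orthogonal_matrix Q"
  shows "norm (Q ** (A::real^'m^'n)) = norm A"
  using norm_matrix_mult_orthogonal[of "transpose Q" "transpose A"] assms
  by (simp add: orthogonal_matrix_transpose norm_transpose matrix_transpose_mul[symmetric])

lemma orthonormal_columns_hcat_blocks:
  assumes "transpose (hcat P Q) ** hcat P Q = mat 1"
  shows "transpose P ** P = mat 1" and "transpose Q ** Q = mat 1"
proof -
  have "(transpose (hcat P Q) ** hcat P Q) $ p $ q = mat 1 $ p $ q" for p q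
    using assms by simp
  from this[of "Inl _" "Inl _"] this[of "Inr _" "Inr _"]
  show "transpose P ** P = mat 1" and "transpose Q ** Q = mat 1"
    by (simp_all add: vec_eq_iff matrix_matrix_mult_def transpose_def hcat_def mat_def)
qed

lemma hcat_matrix_mult: "hcat (X ** P) (X ** Q) = X ** hcat P Q"
  by (simp add: hcat_def matrix_matrix_mult_def vec_eq_iff split: sum.split)

section \<open>The matrix exponential\<close>

primrec dmat_pow :: "real^'n^'n \<Rightarrow> real^'n^'n \<Rightarrow> nat \<Rightarrow> real^'n^'n" where
  "dmat_pow A H 0 = 0"
| "dmat_pow A H (Suc k) = A ** dmat_pow A H k + H ** mat_pow A k"

lemma has_derivative_mat_pow:
  "((\<lambda>A. mat_pow A k) has_derivative (\<lambda>H. dmat_pow A H k)) (at A within S)"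
proof (induction k)
  case (Suc k)
  show ?case
    using matrix_mult.FDERIV[OF has_derivative_ident Suc] by simp
qed simp

lemma norm_mat_pow_le: "norm (mat_pow A k) \<le> sqrt CARD('n) * norm (A::real^'n^'n) ^ k"
proof (induction k)
  case 0
  show ?case by (simp add: norm_orthonormal_columns)
next
  case (Suc k)
  have "norm (mat_pow A (Suc k)) \<le> norm A * norm (mat_pow A k)" by (simp add: norm_matrix_mult_le)
  also have "\<dots> \<le> norm A * (sqrt CARD('n) * norm A ^ k)" by (rule mult_left_mono[OF Suc]) simp
  finally show ?case by (simp add: algebra_simps)
qed

lemma norm_dmat_pow_le:
  assumes "norm (A::real^'n^'n) \<le> r" and "1 \<le> r"
  shows "norm (dmat_pow A H k) \<le> k * sqrt CARD('n) * r ^ k * norm H"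
proof (induction k)
  case (Suc k)
  have "norm (dmat_pow A H (Suc k)) \<le> norm A * norm (dmat_pow A H k) + norm H * norm (mat_pow A k)"
    by (simp add: norm_triangle_le norm_matrix_mult_le add_mono)
  also have "\<dots> \<le> r * (k * sqrt CARD('n) * r ^ k * norm H) + norm H * (sqrt CARD('n) * r ^ k)"
    using assms Suc norm_mat_pow_le[of A k] power_mono[OF assms(1), of k]
    by (intro add_mono mult_mono mult_left_mono order_trans[OF norm_mat_pow_le]) auto
  also have "\<dots> \<le> Suc k * sqrt CARD('n) * r ^ Suc k * norm H"
  proof -
    have "r ^ k \<le> r ^ Suc k" using assms(2) by (intro power_increasing) auto
    then have "norm H * (sqrt CARD('n) * r ^ k) \<le> norm H * (sqrt CARD('n) * r ^ Suc k)"
      by (intro mult_left_mono) auto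
    then show ?thesis by (simp add: algebra_simps)
  qed
  finally show ?case .
qed simp

lemma norm_dmat_pow_term_le:
  assumes "norm (A::real^'n^'n) \<le> r" and "1 \<le> r"
  shows "norm ((1 / fact k) *\<^sub>R dmat_pow A H k) \<le> sqrt CARD('n) * ((2 * r) ^ k / fact k) * norm H"
proof -
  have "real k \<le> 2 ^ k"
    using less_exp[of k] by (metis less_imp_le of_nat_le_iff of_nat_numeral of_nat_power)
  then have "real k * sqrt CARD('n) * r ^ k * norm H \<le> 2 ^ k * sqrt CARD('n) * r ^ k * norm H"
    using assms(2) by (intro mult_right_mono) auto
  then have "norm (dmat_pow A H k) \<le> sqrt CARD('n) * (2 * r) ^ k * norm H"
    using norm_dmat_pow_le[OF assms, of H k] by (simp add: power_mult_distrib mult_ac)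
  then have "norm (dmat_pow A H k) / fact k \<le> sqrt CARD('n) * (2 * r) ^ k * norm H / fact k"
    by (rule divide_right_mono) simp
  then show ?thesis by simp
qed

lemma summable_power_div_fact: "summable (\<lambda>k. (x::real) ^ k / fact k)"
  using summable_exp[of x] by (simp add: field_simps)

lemma summable_mat_exp: "summable (\<lambda>k. (1 / fact k) *\<^sub>R mat_pow (A::real^'n^'n) k)"
proof (rule summable_comparison_test')
  show "summable (\<lambda>k. sqrt CARD('n) * (norm A ^ k / fact k))"
    by (intro summable_mult summable_power_div_fact)
  show "norm ((1 / fact k) *\<^sub>R mat_pow A k) \<le> sqrt CARD('n) * (norm A ^ k / fact k)" for k
    using norm_mat_pow_le[of A k] by (simp add: divide_right_mono)
qed

definition dmat_exp :: "real^'n^'n \<Rightarrow> real^'n^'n \<Rightarrow> real^'n^'n" where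
  "dmat_exp A H = (\<Sum>k. (1 / fact k) *\<^sub>R dmat_pow A H k)"

lemma summable_dmat_exp: "summable (\<lambda>k. (1 / fact k) *\<^sub>R dmat_pow (A::real^'n^'n) H k)"
proof (rule summable_comparison_test')
  show "summable (\<lambda>k. sqrt CARD('n) * ((2 * max 1 (norm A)) ^ k / fact k) * norm H)"
    by (intro summable_mult summable_mult2 summable_power_div_fact)
qed (rule norm_dmat_pow_term_le; simp)

lemma norm_dmat_exp_tail_le:
  assumes "norm (A::real^'n^'n) \<le> r" and "1 \<le> r"
  shows "norm ((\<Sum>k<n. (1 / fact k) *\<^sub>R dmat_pow A H k) - dmat_exp A H)
    \<le> (\<Sum>k. sqrt CARD('n) * ((2 * r) ^ (k + n) / fact (k + n))) * norm H"
proof -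
  have m: "summable (\<lambda>k. sqrt CARD('n) * ((2 * r) ^ (k + n) / fact (k + n)))"
    by (rule summable_mult[OF summable_ignore_initial_segment[OF summable_power_div_fact]])
  have "norm ((\<Sum>k<n. (1 / fact k) *\<^sub>R dmat_pow A H k) - dmat_exp A H)
      = norm (\<Sum>k. (1 / fact (k + n)) *\<^sub>R dmat_pow A H (k + n))"
    unfolding dmat_exp_def suminf_split_initial_segment[OF summable_dmat_exp, of _ _ n]
    by (simp add: norm_minus_commute)
  also have "\<dots> \<le> (\<Sum>k. sqrt CARD('n) * ((2 * r) ^ (k + n) / fact (k + n)) * norm H)"
    by (rule norm_suminf_le[OF norm_dmat_pow_term_le[OF assms] summable_mult2[OF m]])
  also have "\<dots> = (\<Sum>k. sqrt CARD('n) * ((2 * r) ^ (k + n) / fact (k + n))) * norm H"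
    by (rule suminf_mult2[OF m, symmetric])
  finally show ?thesis .
qed

lemma has_derivative_mat_exp: "(mat_exp has_derivative dmat_exp A) (at (A::real^'n^'n))"
proof -
  define r where "r = norm A + 1"
  define S where "S = ball (0::real^'n^'n) r"
  have "\<exists>g. \<forall>x\<in>S. (\<lambda>k. (1 / fact k) *\<^sub>R mat_pow x k) sums g x \<and>
      (g has_derivative dmat_exp x) (at x within S)"
  proof (rule has_derivative_series)
    show "((\<lambda>x. (1 / fact k) *\<^sub>R mat_pow x k) has_derivative (\<lambda>H. (1 / fact k) *\<^sub>R dmat_pow x H k))
        (at x within S)" for k x
      by (intro has_derivative_scaleR_right has_derivative_mat_pow)
    show "\<forall>\<^sub>F n in sequentially. \<forall>x\<in>S. \<forall>H.
        norm ((\<Sum>k<n. (1 / fact k) *\<^sub>R dmat_pow x H k) - dmat_exp x H) \<le> e * norm H" if "e > 0" for e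
    proof -
      obtain N where N: "\<And>n. n \<ge> N \<Longrightarrow>
          norm (\<Sum>k. sqrt CARD('n) * ((2 * r) ^ (k + n) / fact (k + n))) < e"
        using suminf_exist_split[OF \<open>e > 0\<close> summable_mult[OF summable_power_div_fact]] by blast
      have "norm ((\<Sum>k<n. (1 / fact k) *\<^sub>R dmat_pow x H k) - dmat_exp x H) \<le> e * norm H"
        if "n \<ge> N" and "x \<in> S" for n x H
      proof -
        have "norm x \<le> r" "1 \<le> r" using \<open>x \<in> S\<close> by (simp_all add: S_def r_def)
        from order_trans[OF norm_dmat_exp_tail_le[OF this] mult_right_mono] N[OF \<open>n \<ge> N\<close>]
        show ?thesis by auto
      qed
      then show ?thesis unfolding eventually_sequentially by blast
    qed
    show "A \<in> S" by (simp add: S_def r_def)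
    show "(\<lambda>k. (1 / fact k) *\<^sub>R mat_pow A k) sums mat_exp A"
      unfolding mat_exp_def by (rule summable_sums[OF summable_mat_exp])
  qed (simp add: S_def)
  then obtain g where g: "\<And>x. x \<in> S \<Longrightarrow>
      (\<lambda>k. (1 / fact k) *\<^sub>R mat_pow x k) sums g x \<and> (g has_derivative dmat_exp x) (at x within S)"
    by blast
  have A: "A \<in> S" and S: "open S" by (simp_all add: S_def r_def)
  have "(g has_derivative dmat_exp A) (at A)"
    using g[OF A] at_within_open[OF A S] by simp
  then show ?thesis
  proof (rule has_derivative_transform_within_open[OF _ S A])
    show "g x = mat_exp x" if "x \<in> S" for x
      using g[OF that] by (simp add: mat_exp_def sums_iff)
  qed
qed

lemma dmat_pow_commuting:
  assumes "A ** H = H ** (A::real^'n^'n)"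
  shows "dmat_pow A H (Suc k) = Suc k *\<^sub>R (H ** mat_pow A k)"
proof (induction k)
  case (Suc k)
  have "dmat_pow A H (Suc (Suc k)) = A ** (Suc k *\<^sub>R (H ** mat_pow A k)) + H ** mat_pow A (Suc k)"
    using Suc by simp
  also have "\<dots> = Suc k *\<^sub>R (H ** mat_pow A (Suc k)) + H ** mat_pow A (Suc k)"
    using assms by (simp add: matrix_mult.scaleR_right matrix_mul_assoc)
  also have "\<dots> = Suc (Suc k) *\<^sub>R (H ** mat_pow A (Suc k))"
    unfolding of_nat_Suc[of "Suc k"] scaleR_add_left scaleR_one by (rule add.commute)
  finally show ?case .
qed simp

lemma fact_Suc_inverse_mult: "1 / fact (Suc k) * real (Suc k) = 1 / (fact k :: real)"
  by (simp add: fact_Suc del: of_nat_Suc)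

lemma dmat_exp_commuting:
  assumes "A ** H = H ** (A::real^'n^'n)"
  shows "dmat_exp A H = H ** mat_exp A"
proof -
  have "dmat_exp A H = (\<Sum>k. (1 / fact (Suc k)) *\<^sub>R dmat_pow A H (Suc k))"
    unfolding dmat_exp_def using suminf_split_head[OF summable_dmat_exp, of A H]
    by (simp del: dmat_pow.simps(2) fact_Suc)
  also have "\<dots> = (\<Sum>k. H ** ((1 / fact k) *\<^sub>R mat_pow A k))"
    by (simp only: dmat_pow_commuting[OF assms] scaleR_scaleR fact_Suc_inverse_mult
        matrix_mult.scaleR_right)
  also have "\<dots> = H ** mat_exp A"
    unfolding mat_exp_def
    by (rule bounded_linear.suminf[OF matrix_mult.bounded_linear_right summable_mat_exp, symmetric])
  finally show ?thesis .
qed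

lemma has_derivative_mat_exp_scaleR:
  "((\<lambda>t. mat_exp (t *\<^sub>R P)) has_derivative (\<lambda>s. s *\<^sub>R (P ** mat_exp (t *\<^sub>R P)))) (at t within T)"
proof -
  have "((\<lambda>t. mat_exp (t *\<^sub>R P)) has_derivative (\<lambda>s. dmat_exp (t *\<^sub>R P) (s *\<^sub>R P))) (at t within T)"
    by (rule has_derivative_compose[OF has_derivative_scaleR_left[OF has_derivative_ident]
          has_derivative_mat_exp])
  moreover have "dmat_exp (t *\<^sub>R P) (s *\<^sub>R P) = s *\<^sub>R (P ** mat_exp (t *\<^sub>R P))" for s
    by (subst dmat_exp_commuting) (simp_all add: matrix_scalar_ac scalar_matrix_assoc[symmetric])
  ultimately show ?thesis by simp
qed

lemma mat_exp_0: "mat_exp (0::real^'n^'n) = mat 1"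
proof -
  have "(\<Sum>k. (1 / fact (Suc k)) *\<^sub>R mat_pow (0::real^'n^'n) (Suc k)) = mat_exp 0 - mat 1"
    unfolding mat_exp_def using suminf_split_head[OF summable_mat_exp]
    by (simp del: mat_pow.simps(2))
  then show ?thesis by simp
qed

lemma has_derivative_transpose_mat_exp_mult:
  assumes "transpose P = - P"
  shows "((\<lambda>t. transpose (mat_exp (t *\<^sub>R P)) ** mat_exp (t *\<^sub>R P')) has_derivative
    (\<lambda>s. s *\<^sub>R (transpose (mat_exp (t *\<^sub>R P)) ** (P' - P) ** mat_exp (t *\<^sub>R P')))) (at t)"
proof -
  let ?U = "mat_exp (t *\<^sub>R P)" and ?V = "mat_exp (t *\<^sub>R P')"
  have "((\<lambda>t. transpose (mat_exp (t *\<^sub>R P)) ** mat_exp (t *\<^sub>R P')) has_derivative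
      (\<lambda>s. transpose ?U ** (s *\<^sub>R (P' ** ?V)) + transpose (s *\<^sub>R (P ** ?U)) ** ?V)) (at t)"
    by (rule matrix_mult.FDERIV[OF bounded_linear.has_derivative[OF bounded_linear_transpose
          has_derivative_mat_exp_scaleR] has_derivative_mat_exp_scaleR])
  moreover have "transpose ?U ** (s *\<^sub>R (P' ** ?V)) + transpose (s *\<^sub>R (P ** ?U)) ** ?V
      = s *\<^sub>R (transpose ?U ** (P' - P) ** ?V)" for s
    using assms
    by (simp add: matrix_transpose_mul transpose_scalar matrix_mul_assoc matrix_mult.scaleR_left
        matrix_mult.scaleR_right matrix_mult.diff_left matrix_mult.diff_right matrix_mult.minus_left
        matrix_mult.minus_right algebra_simps)
  ultimately show ?thesis by simp
qed

lemma orthogonal_matrix_mat_exp_skew: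
  assumes "transpose P = - P"
  shows "orthogonal_matrix (mat_exp P)"
proof -
  let ?W = "\<lambda>t. transpose (mat_exp (t *\<^sub>R P)) ** mat_exp (t *\<^sub>R P)"
  have "(?W has_derivative (\<lambda>s. 0)) (at t within UNIV)" for t
    using has_derivative_transpose_mat_exp_mult[OF assms, of P t] by simp
  then obtain c where "\<forall>t\<in>UNIV. ?W t = c"
    using has_derivative_zero_constant[OF convex_UNIV, of ?W] by metis
  then have "?W 1 = ?W 0" by (metis UNIV_I)
  then show ?thesis by (simp add: orthogonal_matrix mat_exp_0)
qed

lemma onorm_scaleR_const: "onorm (\<lambda>s::real. s *\<^sub>R M) = norm M"
  using onorm_scaleR_left[OF bounded_linear_ident, of M] by (simp add: onorm_id)

(* With U t = mat_exp (t P) and V t = mat_exp (t P'), the product (U t)^T V t moves with velocity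
   (U t)^T (P' - P) V t, whose norm is norm (P' - P) because U t and V t are orthogonal. *)
lemma norm_mat_exp_diff_skew_le:
  assumes "transpose P = - P" and "transpose P' = - P'"
  shows "norm (mat_exp P' - mat_exp P) \<le> norm (P' - P)"
proof -
  let ?W = "\<lambda>t. transpose (mat_exp (t *\<^sub>R P)) ** mat_exp (t *\<^sub>R P')"
  have bound: "onorm (\<lambda>s. s *\<^sub>R (transpose (mat_exp (t *\<^sub>R P)) ** (P' - P) ** mat_exp (t *\<^sub>R P')))
      \<le> norm (P' - P)" for t
  proof -
    have "orthogonal_matrix (transpose (mat_exp (t *\<^sub>R P)))"
      and "orthogonal_matrix (mat_exp (t *\<^sub>R P'))"
      using assms by (simp_all add: orthogonal_matrix_mat_exp_skew transpose_scalar)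
    then show ?thesis
      by (simp add: onorm_scaleR_const norm_orthogonal_matrix_mult norm_matrix_mult_orthogonal)
  qed
  have "norm (?W 1 - ?W 0) \<le> norm (P' - P) * norm (1 - 0 :: real)"
    by (rule differentiable_bound[OF convex_UNIV
          has_derivative_transpose_mat_exp_mult[OF assms(1)] bound]) simp_all
  then have "norm (transpose (mat_exp P) ** mat_exp P' - mat 1) \<le> norm (P' - P)"
    by (simp add: mat_exp_0)
  moreover have
    "mat_exp P' - mat_exp P = mat_exp P ** (transpose (mat_exp P) ** mat_exp P' - mat 1)"
    using orthogonal_matrix_mat_exp_skew[OF assms(1)]
    by (simp add: orthogonal_matrix_def matrix_mult.diff_right matrix_mul_assoc)
  ultimately show ?thesis
    using norm_orthogonal_matrix_mult[OF orthogonal_matrix_mat_exp_skew[OF assms(1)],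
        of "transpose (mat_exp P) ** mat_exp P' - mat 1"] by simp
qed

lemma lipschitz_on_mat_exp_skew: "1-lipschitz_on {P. transpose P = - P} mat_exp"
  by (rule lipschitz_onI) (simp_all add: dist_norm norm_mat_exp_diff_skew_le)

section \<open>Bounded Lipschitz maps\<close>

(* The bound is carried along because a product of Lipschitz maps is Lipschitz only where the
   factors are bounded. *)
definition bounded_lipschitz_on ::
  "real \<Rightarrow> real \<Rightarrow> 'a::metric_space set \<Rightarrow> ('a \<Rightarrow> 'b::real_normed_vector) \<Rightarrow> bool" where
  "bounded_lipschitz_on L b S f \<longleftrightarrow> L-lipschitz_on S f \<and> 0 \<le> b \<and> (\<forall>x\<in>S. norm (f x) \<le> b)"

lemma bounded_lipschitz_onD:
  assumes "bounded_lipschitz_on L b S f"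
  shows "L-lipschitz_on S f" and "0 \<le> L" and "0 \<le> b" and "\<And>x. x \<in> S \<Longrightarrow> norm (f x) \<le> b"
  using assms lipschitz_on_nonneg[of L S f] by (auto simp: bounded_lipschitz_on_def)

lemma bounded_lipschitz_on_mono:
  assumes "bounded_lipschitz_on L b S f" and "T \<subseteq> S" and "L \<le> L'" and "b \<le> b'"
  shows "bounded_lipschitz_on L' b' T f"
  using assms lipschitz_on_mono[of L S f T L'] by (force simp: bounded_lipschitz_on_def)

lemma bounded_lipschitz_on_const: "bounded_lipschitz_on 0 (norm c) S (\<lambda>_. c)"
  by (simp add: bounded_lipschitz_on_def lipschitz_on_constant)

lemma bounded_lipschitz_on_id: "0 \<le> r \<Longrightarrow> bounded_lipschitz_on 1 r (cball 0 r) (\<lambda>x. x)"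
  by (simp add: bounded_lipschitz_on_def lipschitz_on_id)

lemma bounded_lipschitz_on_add:
  assumes f: "bounded_lipschitz_on Lf bf S f" and g: "bounded_lipschitz_on Lg bg S g"
  shows "bounded_lipschitz_on (Lf + Lg) (bf + bg) S (\<lambda>x. f x + g x)"
proof -
  have "norm (f x + g x) \<le> bf + bg" if "x \<in> S" for x
    using that bounded_lipschitz_onD(4)[OF f] bounded_lipschitz_onD(4)[OF g]
    by (intro order_trans[OF norm_triangle_ineq add_mono])
  then show ?thesis
    using f g lipschitz_on_add[of Lf S f Lg g] by (simp add: bounded_lipschitz_on_def)
qed

lemma bounded_lipschitz_on_scaleR:
  assumes "bounded_lipschitz_on L b S f"
  shows "bounded_lipschitz_on (\<bar>c\<bar> * L) (\<bar>c\<bar> * b) S (\<lambda>x. c *\<^sub>R f x)"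
  using assms lipschitz_on_cmult[of L S f c] by (simp add: bounded_lipschitz_on_def mult_left_mono)

lemma bounded_lipschitz_on_diff:
  assumes "bounded_lipschitz_on Lf bf S f" and "bounded_lipschitz_on Lg bg S g"
  shows "bounded_lipschitz_on (Lf + Lg) (bf + bg) S (\<lambda>x. f x - g x)"
  using bounded_lipschitz_on_add[OF assms(1) bounded_lipschitz_on_scaleR[OF assms(2), of "-1"]]
  by simp

lemma bounded_lipschitz_on_compose:
  assumes "Lf-lipschitz_on S f" and "f ` S \<subseteq> T" and "bounded_lipschitz_on Lg bg T g"
  shows "bounded_lipschitz_on (Lg * Lf) bg S (\<lambda>x. g (f x))"
  using assms lipschitz_on_compose2[of Lf S f Lg g] lipschitz_on_subset[of Lg T g "f ` S"]
  by (auto simp: bounded_lipschitz_on_def)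

lemma bounded_lipschitz_on_transpose:
  assumes "bounded_lipschitz_on L b S f"
  shows "bounded_lipschitz_on L b S (\<lambda>x. transpose (f x :: real^'n^'m))"
  using assms
  by (simp add: bounded_lipschitz_on_def lipschitz_on_def dist_norm norm_transpose
      transpose_diff[symmetric])

lemma bounded_lipschitz_on_matrix_mult:
  assumes f: "bounded_lipschitz_on Lf bf S f" and g: "bounded_lipschitz_on Lg bg S g"
  shows "bounded_lipschitz_on (Lf * bg + bf * Lg) (bf * bg) S
    (\<lambda>x. (f x :: real^'n^'m) ** (g x :: real^'k^'n))"
proof -
  note f' = bounded_lipschitz_onD[OF f] and g' = bounded_lipschitz_onD[OF g]
  have "dist (f x ** g x) (f y ** g y) \<le> (Lf * bg + bf * Lg) * dist x y" if "x \<in> S" "y \<in> S" for x y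
  proof -
    have "f x ** g x - f y ** g y = (f x - f y) ** g x + f y ** (g x - g y)"
      by (simp add: matrix_mult.diff_left matrix_mult.diff_right)
    then have "dist (f x ** g x) (f y ** g y)
        \<le> dist (f x) (f y) * norm (g x) + norm (f y) * dist (g x) (g y)"
      by (metis dist_norm norm_triangle_le norm_matrix_mult_le add_mono)
    also have "\<dots> \<le> (Lf * dist x y) * bg + bf * (Lg * dist x y)"
      using that f'(2-4) g'(3,4) lipschitz_onD[OF f'(1) that] lipschitz_onD[OF g'(1) that]
      by (intro add_mono mult_mono) auto
    finally show ?thesis by (simp add: algebra_simps)
  qed
  moreover have "norm (f x ** g x) \<le> bf * bg" if "x \<in> S" for x
    using that f' g' by (intro order_trans[OF norm_matrix_mult_le] mult_mono) auto
  ultimately show ?thesis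
    using f' g' by (simp add: bounded_lipschitz_on_def lipschitz_on_def)
qed

lemma bounded_lipschitz_on_mat_exp_minus_1:
  assumes F: "bounded_lipschitz_on L b S F" and skew: "\<And>x. x \<in> S \<Longrightarrow> transpose (F x) = - F x"
  shows "bounded_lipschitz_on L b S (\<lambda>x. mat_exp (F x) - mat 1)"
proof -
  have "L-lipschitz_on S (\<lambda>x. mat_exp (F x))"
    using lipschitz_on_compose2[OF bounded_lipschitz_onD(1)[OF F]
        lipschitz_on_subset[OF lipschitz_on_mat_exp_skew]] skew
    by auto
  then have "L-lipschitz_on S (\<lambda>x. mat_exp (F x) - mat 1)"
    using lipschitz_on_diff[OF _ lipschitz_on_constant] by fastforce
  moreover have "norm (mat_exp (F x) - mat 1) \<le> b" if "x \<in> S" for x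
    using norm_mat_exp_diff_skew_le[OF _ skew[OF that], of 0] bounded_lipschitz_onD(4)[OF F that]
    by (simp add: mat_exp_0 transpose_zero)
  ultimately show ?thesis
    using bounded_lipschitz_onD(3)[OF F] by (simp add: bounded_lipschitz_on_def)
qed

section \<open>Lipschitz bounds for the attention map\<close>

lemma lipschitz_on_matrix_mult_right: "(norm H)-lipschitz_on S (\<lambda>Y. (Y::real^'n^'m) ** H)"
proof (rule lipschitz_onI)
  show "dist (Y ** H) (Z ** H) \<le> norm H * dist Y Z" for Y Z
    using norm_matrix_mult_le[of "Y - Z" H]
    by (simp add: dist_norm matrix_mult.diff_left mult.commute)
qed simp

lemma bounded_lipschitz_on_matrix_mult_right:
  "0 \<le> \<rho> \<Longrightarrow> bounded_lipschitz_on (norm H) (\<rho> * norm H) (cball 0 \<rho>) (\<lambda>Y. (Y::real^'n^'m) ** H)"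
  using bounded_lipschitz_on_matrix_mult[OF bounded_lipschitz_on_id bounded_lipschitz_on_const,
      of \<rho> H]
  by simp

lemma bounded_lipschitz_on_normalize:
  assumes "0 < \<epsilon>"
  shows "bounded_lipschitz_on (2 / \<epsilon>) 1 UNIV (\<lambda>M::'a::real_normed_vector. (1 / (norm M + \<epsilon>)) *\<^sub>R M)"
proof -
  have "dist ((1 / (norm a + \<epsilon>)) *\<^sub>R a) ((1 / (norm b + \<epsilon>)) *\<^sub>R b) \<le> 2 / \<epsilon> * dist a b" for a b :: 'a
  proof -
    define na nb where "na = norm a + \<epsilon>" and "nb = norm b + \<epsilon>"
    have pos: "\<epsilon> \<le> na" "\<epsilon> \<le> nb" by (simp_all add: na_def nb_def)
    have "1 / na - 1 / nb = (nb - na) / (na * nb)"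
      using pos assms by (simp add: field_simps)
    moreover have "(1 / na) *\<^sub>R a - (1 / nb) *\<^sub>R b = (1 / na) *\<^sub>R (a - b) + (1 / na - 1 / nb) *\<^sub>R b"
      by (simp add: algebra_simps)
    ultimately have "(1 / na) *\<^sub>R a - (1 / nb) *\<^sub>R b
        = (1 / na) *\<^sub>R (a - b) + ((nb - na) / (na * nb)) *\<^sub>R b"
      by simp
    then have "dist ((1 / na) *\<^sub>R a) ((1 / nb) *\<^sub>R b)
        \<le> dist a b / na + (\<bar>nb - na\<bar> / na) * (norm b / nb)"
      using pos assms norm_triangle_ineq[of "(1 / na) *\<^sub>R (a - b)" "((nb - na) / (na * nb)) *\<^sub>R b"]
      by (simp add: dist_norm abs_mult)
    also have "\<dots> \<le> dist a b / \<epsilon> + (dist a b / \<epsilon>) * 1"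
    proof (intro add_mono mult_mono frac_le)
      show "\<bar>nb - na\<bar> \<le> dist a b"
        using norm_triangle_ineq3[of a b] by (simp add: na_def nb_def dist_norm)
      show "norm b / nb \<le> 1" using assms by (simp add: nb_def divide_le_eq add_nonneg_pos)
    qed (use pos assms in auto)
    finally show ?thesis by (simp add: na_def nb_def)
  qed
  moreover have "norm ((1 / (norm M + \<epsilon>)) *\<^sub>R M) \<le> 1" for M :: 'a
  proof -
    have "0 < norm M + \<epsilon>" using assms by (simp add: add_nonneg_pos)
    then show ?thesis using assms by (simp add: divide_le_eq)
  qed
  ultimately show ?thesis
    using assms by (simp add: bounded_lipschitz_on_def lipschitz_on_def)
qed

lemma ns_step_eq: "ns_step (M::real^'n^'m) = (3/2) *\<^sub>R M - (1/2) *\<^sub>R (M ** (transpose M ** M))"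
  by (simp add: ns_step_def matrix_mult.diff_right matrix_mult.scaleR_right scaleR_diff_right)

lemma bounded_lipschitz_on_ns_step:
  assumes "0 \<le> r"
  shows "bounded_lipschitz_on (3/2 + 3/2 * r\<^sup>2) (3/2 * r + 1/2 * r ^ 3) (cball 0 r)
    (ns_step :: real^'n^'m \<Rightarrow> real^'n^'m)"
proof -
  note id = bounded_lipschitz_on_id[OF assms, where 'a="real^'n^'m"]
  note cubic = bounded_lipschitz_on_matrix_mult[OF id
      bounded_lipschitz_on_matrix_mult[OF bounded_lipschitz_on_transpose[OF id] id]]
  have "bounded_lipschitz_on (3/2 + 3/2 * r\<^sup>2) (3/2 * r + 1/2 * r ^ 3) (cball 0 r)
      (\<lambda>M::real^'n^'m. (3/2) *\<^sub>R M - (1/2) *\<^sub>R (M ** (transpose M ** M)))"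
    using bounded_lipschitz_on_diff[OF bounded_lipschitz_on_scaleR[OF id, of "3/2"]
        bounded_lipschitz_on_scaleR[OF cubic, of "1/2"]]
    by (rule bounded_lipschitz_on_mono)
      (simp_all add: power2_eq_square power3_eq_cube algebra_simps)
  moreover have "ns_step = (\<lambda>M::real^'n^'m. (3/2) *\<^sub>R M - (1/2) *\<^sub>R (M ** (transpose M ** M)))"
    by (simp add: fun_eq_iff ns_step_eq)
  ultimately show ?thesis by simp
qed

lemma ex_bounded_lipschitz_on_ns_step_iterate:
  "0 \<le> r \<Longrightarrow> \<exists>L b. bounded_lipschitz_on L b (cball 0 r) (ns_step ^^ k :: real^'n^'m \<Rightarrow> real^'n^'m)"
proof (induction k)
  case 0
  then show ?case using bounded_lipschitz_on_id by (auto simp: id_def)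
next
  case (Suc k)
  then obtain L b where L: "bounded_lipschitz_on L b (cball 0 r) (ns_step ^^ k :: real^'n^'m \<Rightarrow> _)"
    by blast
  have "(ns_step ^^ k :: real^'n^'m \<Rightarrow> _) ` cball 0 r \<subseteq> cball 0 b"
    using bounded_lipschitz_onD(4)[OF L] by auto
  from bounded_lipschitz_on_compose[OF bounded_lipschitz_onD(1)[OF L] this
      bounded_lipschitz_on_ns_step[OF bounded_lipschitz_onD(3)[OF L]]]
  show ?case by auto
qed

(* The normalisation maps into the unit ball, so B is Lipschitz on the whole space. *)
lemma bounded_lipschitz_on_OSA_B:
  assumes "0 < \<epsilon>"
  obtains L b where "0 \<le> L"
    and "\<And>H. bounded_lipschitz_on (L * (2 / \<epsilon> * norm H)) b UNIV
      (OSA_B \<epsilon> K H :: real^'d^'N \<Rightarrow> real^('v::finite + 'v)^'N)"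
proof -
  obtain L b
    where ns: "bounded_lipschitz_on L b (cball 0 1) (ns_step ^^ K :: real^('v + 'v)^'N \<Rightarrow> _)"
    using ex_bounded_lipschitz_on_ns_step_iterate[of 1 K] by auto
  have "bounded_lipschitz_on (L * (2 / \<epsilon> * norm H)) b UNIV (OSA_B \<epsilon> K H :: real^'d^'N \<Rightarrow> _)"
    for H :: "real^('v + 'v)^'d"
  proof -
    note M0 = bounded_lipschitz_on_compose[OF lipschitz_on_matrix_mult_right[of H UNIV] subset_UNIV
        bounded_lipschitz_on_normalize[OF assms]]
    have "(\<lambda>X::real^'d^'N. (1 / (norm (X ** H) + \<epsilon>)) *\<^sub>R (X ** H)) ` UNIV \<subseteq> cball 0 1"
      using bounded_lipschitz_onD(4)[OF M0] by auto
    from bounded_lipschitz_on_compose[OF bounded_lipschitz_onD(1)[OF M0] this ns]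
    show ?thesis by (simp add: OSA_B_def[abs_def] Let_def frob_norm_eq_norm)
  qed
  with bounded_lipschitz_onD(2)[OF ns] show ?thesis using that by blast
qed

lemma bounded_lipschitz_on_score:
  assumes "0 \<le> \<rho>"
  shows "bounded_lipschitz_on (\<bar>c\<bar> * (4 * \<rho> * norm P * norm Q)) (\<bar>c\<bar> * (2 * \<rho>\<^sup>2 * norm P * norm Q))
    (cball 0 \<rho>)
    (\<lambda>Y::real^'d^'N. c *\<^sub>R (Y ** P ** transpose (Y ** Q) - Y ** Q ** transpose (Y ** P)))"
proof -
  note YP = bounded_lipschitz_on_matrix_mult_right[OF assms, of P]
    and YQ = bounded_lipschitz_on_matrix_mult_right[OF assms, of Q]
  from bounded_lipschitz_on_scaleR[OF bounded_lipschitz_on_diff[OF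
        bounded_lipschitz_on_matrix_mult[OF YP bounded_lipschitz_on_transpose[OF YQ]]
        bounded_lipschitz_on_matrix_mult[OF YQ bounded_lipschitz_on_transpose[OF YP]]], of c]
  show ?thesis
    by (rule bounded_lipschitz_on_mono) (simp_all add: power2_eq_square algebra_simps)
qed

lemma skew_congruence:
  "transpose F = - (F::real^'n^'n) \<Longrightarrow>
    transpose (transpose (B::real^'m^'n) ** F ** B) = - (transpose B ** F ** B)"
  by (simp add: matrix_transpose_mul matrix_mul_assoc matrix_mult.minus_left
      matrix_mult.minus_right)

lemma bounded_lipschitz_on_conj_mat_exp:
  assumes B: "bounded_lipschitz_on LB b S B" and F: "bounded_lipschitz_on LF bF S F"
    and skew: "\<And>x. x \<in> S \<Longrightarrow> transpose (F x) = - F x"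
  shows "bounded_lipschitz_on (b ^ 3 * (4 * LB * bF + b * LF)) (b ^ 4 * bF) S
    (\<lambda>x. B x ** (mat_exp (transpose (B x) ** F x ** B x) - mat 1) ** transpose (B x))"
proof -
  note BT = bounded_lipschitz_on_transpose[OF B]
  note E = bounded_lipschitz_on_mat_exp_minus_1[OF
      bounded_lipschitz_on_matrix_mult[OF bounded_lipschitz_on_matrix_mult[OF BT F] B]
      skew_congruence[OF skew]]
  from bounded_lipschitz_on_matrix_mult[OF bounded_lipschitz_on_matrix_mult[OF B E] BT]
  show ?thesis
    by (rule bounded_lipschitz_on_mono) (simp_all add: eval_nat_numeral algebra_simps)
qed

(* Orthonormal columns fix the norms of W^Q, W^K and [W^Q, W^K]; together with the linearity of
   the score in alpha this makes c independent of the weights and of alpha. *)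
lemma lipschitz_on_OSA_A:
  assumes "0 < \<epsilon>" and "0 \<le> \<rho>"
  obtains c where "0 \<le> c"
    and "\<And>(WQ::real^'v::finite^'d) WK \<alpha>. transpose (hcat WQ WK) ** hcat WQ WK = mat 1 \<Longrightarrow>
      0 < \<alpha> \<Longrightarrow> (\<alpha> * c)-lipschitz_on (cball 0 \<rho>) (OSA_A \<epsilon> K \<alpha> WQ WK :: real^'d^'N \<Rightarrow> real^'N^'N)"
proof -
  define q where "q = sqrt CARD('v)"
  obtain L b where "0 \<le> L" and B: "\<And>H. bounded_lipschitz_on (L * (2 / \<epsilon> * norm H)) b UNIV
      (OSA_B \<epsilon> K H :: real^'d^'N \<Rightarrow> real^('v + 'v)^'N)"
    using bounded_lipschitz_on_OSA_B[OF assms(1)] by blast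
  define LB where "LB = L * (2 / \<epsilon> * sqrt CARD('v + 'v))"
  define c where "c = b ^ 3 * (4 * LB * (2 * \<rho>\<^sup>2 * q) + b * (4 * \<rho> * q))"
  have "0 < q" by (simp add: q_def)
  have "0 \<le> c"
    using assms \<open>0 \<le> L\<close> \<open>0 < q\<close> bounded_lipschitz_onD(3)[OF B] by (simp add: c_def LB_def)
  moreover have "(\<alpha> * c)-lipschitz_on (cball 0 \<rho>) (OSA_A \<epsilon> K \<alpha> WQ WK :: real^'d^'N \<Rightarrow> _)"
    if orth: "transpose (hcat WQ WK) ** hcat WQ WK = mat 1" and "0 < \<alpha>"
    for WQ WK :: "real^'v^'d" and \<alpha>
  proof -
    let ?B = "OSA_B \<epsilon> K (hcat WQ WK) :: real^'d^'N \<Rightarrow> _"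
    let ?S = "\<lambda>Y::real^'d^'N.
      (\<alpha> / q) *\<^sub>R (Y ** WQ ** transpose (Y ** WK) - Y ** WK ** transpose (Y ** WQ))"
    have B': "bounded_lipschitz_on LB b (cball 0 \<rho>) ?B"
      using bounded_lipschitz_on_mono[OF B[of "hcat WQ WK"] subset_UNIV order_refl order_refl]
      by (simp add: LB_def norm_orthonormal_columns[OF orth])
    have "norm WQ = q" and "norm WK = q"
      using orthonormal_columns_hcat_blocks[OF orth]
      by (simp_all add: norm_orthonormal_columns q_def)
    then have S: "bounded_lipschitz_on (\<alpha> * (4 * \<rho> * q)) (\<alpha> * (2 * \<rho>\<^sup>2 * q)) (cball 0 \<rho>) ?S"
      using bounded_lipschitz_on_score[OF assms(2), of "\<alpha> / q" WQ WK] \<open>0 < q\<close> \<open>0 < \<alpha>\<close>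
      by (simp add: power2_eq_square mult.assoc)
    have skew: "transpose (?S Y) = - ?S Y" for Y
      by (simp add: transpose_scalar transpose_diff matrix_transpose_mul algebra_simps)
    from bounded_lipschitz_on_conj_mat_exp[OF B' S skew]
    have "bounded_lipschitz_on (\<alpha> * c) (b ^ 4 * (\<alpha> * (2 * \<rho>\<^sup>2 * q))) (cball 0 \<rho>)
        (\<lambda>Y. ?B Y ** (mat_exp (transpose (?B Y) ** ?S Y ** ?B Y) - mat 1) ** transpose (?B Y))"
      by (simp add: c_def algebra_simps)
    from lipschitz_on_add[OF lipschitz_on_constant bounded_lipschitz_onD(1)[OF this], of "mat 1"]
    show ?thesis by (simp add: OSA_A_def[abs_def] Let_def q_def)
  qed
  ultimately show ?thesis using that by blast
qed

lemma differentiable_matrix_mult: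
  "f differentiable (at x within S) \<Longrightarrow> g differentiable (at x within S) \<Longrightarrow>
    (\<lambda>x. (f x :: real^'n^'m) ** (g x :: real^'k^'n)) differentiable (at x within S)"
  unfolding differentiable_def using matrix_mult.FDERIV by blast

lemma differentiable_transpose:
  "f differentiable F \<Longrightarrow> (\<lambda>x. transpose (f x :: real^'n^'m)) differentiable F"
  unfolding differentiable_def using bounded_linear.has_derivative[OF bounded_linear_transpose]
  by blast

lemma differentiable_ns_step_iterate:
  assumes "f differentiable (at x within S)"
  shows "(\<lambda>x. (ns_step ^^ k) (f x :: real^'n^'m)) differentiable (at x within S)"
proof (induction k)
  case (Suc k)
  let ?g = "\<lambda>x. (ns_step ^^ k) (f x)"
  have "(\<lambda>x. ?g x ** (transpose (?g x) ** ?g x)) differentiable (at x within S)"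
    using Suc by (intro differentiable_matrix_mult differentiable_transpose)
  then have "(\<lambda>x. (3/2) *\<^sub>R ?g x - (1/2) *\<^sub>R (?g x ** (transpose (?g x) ** ?g x)))
      differentiable (at x within S)"
    using Suc by (intro differentiable_diff differentiable_scaleR differentiable_const)
  moreover have "(ns_step ^^ Suc k) (f x)
      = (3/2) *\<^sub>R ?g x - (1/2) *\<^sub>R (?g x ** (transpose (?g x) ** ?g x))" for x
    by (simp only: funpow.simps(2) comp_def ns_step_eq[of "?g x"])
  ultimately show ?case by (simp only:)
qed (simp add: assms)

lemma differentiable_OSA_A:
  assumes "0 < \<epsilon>" and "X ** hcat WQ WK \<noteq> 0"
  shows "OSA_A \<epsilon> K \<alpha> WQ WK differentiable (at X)"
proof -
  have XH: "(\<lambda>Y. Y ** hcat WQ WK) differentiable (at X)"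
    by (intro differentiable_matrix_mult differentiable_ident differentiable_const)
  have "(\<lambda>Y. norm (Y ** hcat WQ WK)) differentiable (at X)"
    using differentiable_chain_at[OF XH differentiable_norm_at] assms(2) by (simp add: o_def)
  moreover have "norm (X ** hcat WQ WK) + \<epsilon> \<noteq> 0"
    using assms(1) norm_ge_zero[of "X ** hcat WQ WK"] by linarith
  ultimately have "(\<lambda>Y. 1 / (norm (Y ** hcat WQ WK) + \<epsilon>)) differentiable (at X)"
    by (intro differentiable_divide differentiable_add differentiable_const)
  then have B: "OSA_B \<epsilon> K (hcat WQ WK) differentiable (at X)"
    unfolding OSA_B_def[abs_def] Let_def frob_norm_eq_norm
    by (intro differentiable_ns_step_iterate differentiable_scaleR XH)
  have "(\<lambda>Y. transpose (OSA_B \<epsilon> K (hcat WQ WK) Y) **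
      ((\<alpha> / sqrt CARD('v)) *\<^sub>R (Y ** WQ ** transpose (Y ** WK) - Y ** WK ** transpose (Y ** WQ))) **
      OSA_B \<epsilon> K (hcat WQ WK) Y) differentiable (at X)"
    using B by (intro differentiable_matrix_mult differentiable_transpose differentiable_scaleR
        differentiable_diff differentiable_const differentiable_ident)
  from differentiable_chain_at[OF this differentiableI[OF has_derivative_mat_exp]]
  show ?thesis
    unfolding OSA_A_def[abs_def] Let_def o_def
    using B by (intro differentiable_add differentiable_matrix_mult differentiable_transpose
        differentiable_diff differentiable_const)
qed

section \<open>Jacobian bounds\<close>

lemma norm_derivative_le_lipschitz_remainder:
  assumes "linear f'" and L: "L-lipschitz_on (ball x d) f" and "0 < t" and "t * norm h < d"
  shows "t * norm (f' h) \<le> L * (t * norm h) + norm (f (x + t *\<^sub>R h) - f x - f' (t *\<^sub>R h))"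
proof -
  have "0 \<le> t * norm h" using assms(3) by simp
  with assms(4) have "0 < d" by linarith
  have "x + t *\<^sub>R h \<in> ball x d" using assms(3,4) by (simp add: dist_norm)
  from lipschitz_onD[OF L this centre_in_ball[THEN iffD2, OF \<open>0 < d\<close>]]
  have lip: "norm (f (x + t *\<^sub>R h) - f x) \<le> L * (t * norm h)"
    using assms(3) by (simp add: dist_norm)
  have "t * norm (f' h) = norm (f' (t *\<^sub>R h))"
    using assms(1,3) by (simp add: linear_scale)
  also have "\<dots> \<le> norm (f (x + t *\<^sub>R h) - f x) + norm (f (x + t *\<^sub>R h) - f x - f' (t *\<^sub>R h))"
    by (metis norm_minus_commute norm_triangle_sub)
  finally show ?thesis using lip by simp
qed

lemma onorm_derivative_le_lipschitz:
  fixes f :: "'a::{real_normed_vector,perfect_space} \<Rightarrow> 'b::real_normed_vector"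
  assumes f: "(f has_derivative f') (at x)" and "0 < d" and L: "L-lipschitz_on (ball x d) f"
  shows "onorm f' \<le> L"
proof (rule onorm_le)
  fix h :: 'a
  have lin: "linear f'" using f by (simp add: has_derivative_linear)
  show "norm (f' h) \<le> L * norm h"
  proof (cases "h = 0")
    case True
    then show ?thesis using lin by (simp add: linear_0)
  next
    case False
    define R where "R u = norm (f (x + u) - f x - f' u) / norm u" for u
    have "(R \<longlongrightarrow> 0) (at 0)" using f by (simp add: has_derivative_at R_def[abs_def])
    moreover have "filterlim (\<lambda>t. t *\<^sub>R h) (at 0) (at_right 0)"
      using False unfolding filterlim_at
      by (auto intro!: tendsto_eq_intros eventually_mono[OF eventually_at_right_less])
    ultimately have R0: "((\<lambda>t. R (t *\<^sub>R h)) \<longlongrightarrow> 0) (at_right 0)"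
      by (rule filterlim_compose)
    have "norm (f' h) \<le> (L + R (t *\<^sub>R h)) * norm h" if "0 < t" "t < d / norm h" for t
    proof -
      have "t * norm h < d" using that False by (simp add: field_simps)
      from norm_derivative_le_lipschitz_remainder[OF lin L \<open>0 < t\<close> this]
      have "t * norm (f' h) \<le> t * ((L + R (t *\<^sub>R h)) * norm h)"
        using that False by (simp add: R_def algebra_simps)
      then show ?thesis using \<open>0 < t\<close> by (rule mult_left_le_imp_le)
    qed
    then have "\<forall>\<^sub>F t in at_right 0. norm (f' h) \<le> (L + R (t *\<^sub>R h)) * norm h"
      using False \<open>0 < d\<close> by (intro eventually_at_rightI[of 0 "d / norm h"]) auto
    from tendsto_le[OF trivial_limit_at_right_real
        tendsto_mult_right[OF tendsto_add[OF tendsto_const R0]] tendsto_const this]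
    show ?thesis by simp
  qed
qed

lemma unvecm_vecm [simp]: "unvecm (vecm A) = A"
  by (simp add: unvecm_def vecm_def vec_eq_iff)

lemma vecm_unvecm [simp]: "vecm (unvecm v) = v"
  by (simp add: unvecm_def vecm_def vec_eq_iff)

lemma vecm_diff: "vecm (A - B) = vecm A - vecm B"
  by (simp add: vecm_def vec_eq_iff)

lemma unvecm_diff: "unvecm (u - v) = unvecm u - unvecm v"
  by (simp add: unvecm_def vec_eq_iff)

lemma sum_UNIV_prod: "(\<Sum>p\<in>UNIV. g p) = (\<Sum>a\<in>UNIV. \<Sum>b\<in>UNIV. g (a, b))"
  by (simp add: sum.cartesian_product UNIV_Times_UNIV[symmetric] del: UNIV_Times_UNIV)

lemma norm_vecm: "norm (vecm (A::real^'n^'m)) = norm A"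
proof -
  have "norm (vecm A) ^ 2 = (\<Sum>j\<in>UNIV. \<Sum>i\<in>UNIV. (A $ i $ j) ^ 2)"
    unfolding norm_vec_squared vecm_def by (simp add: sum_UNIV_prod)
  also have "\<dots> = norm A ^ 2" unfolding norm_matrix_squared by (rule sum.swap)
  finally show ?thesis by (simp add: power2_eq_iff_nonneg)
qed

lemma norm_unvecm: "norm (unvecm v) = norm v"
  using norm_vecm[of "unvecm v"] by simp

lemma bounded_linear_vecm: "bounded_linear (vecm :: real^'n^'m \<Rightarrow> _)"
proof (rule bounded_linear_intro[of _ 1])
  show "norm (vecm A) \<le> norm A * 1" for A :: "real^'n^'m" by (simp add: norm_vecm)
qed (simp_all add: vecm_def vec_eq_iff)

lemma bounded_linear_unvecm: "bounded_linear (unvecm :: real^('n \<times> 'm) \<Rightarrow> real^'n^'m)"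
proof (rule bounded_linear_intro[of _ 1])
  show "norm (unvecm v) \<le> norm v * 1" for v :: "real^('n \<times> 'm)" by (simp add: norm_unvecm)
qed (simp_all add: unvecm_def vec_eq_iff)

lemma dist_vecm: "dist (vecm A) (vecm B) = dist A B"
  by (simp add: dist_norm vecm_diff[symmetric] norm_vecm)

lemma dist_unvecm: "dist (unvecm u) (unvecm v) = dist u v"
  by (simp add: dist_norm unvecm_diff[symmetric] norm_unvecm)

lemma lipschitz_on_vectorised:
  "L-lipschitz_on S f \<Longrightarrow> L-lipschitz_on (unvecm -` S) (\<lambda>v. vecm (f (unvecm v)))"
  by (auto simp: lipschitz_on_def dist_vecm dist_unvecm[symmetric])

lemma differentiable_vectorised:
  assumes "f differentiable (at X)"
  shows "(\<lambda>v. vecm (f (unvecm v))) differentiable (at (vecm X))"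
proof -
  have "(f \<circ> unvecm) differentiable (at (vecm X))"
    by (rule differentiable_chain_at[OF
          bounded_linear_imp_differentiable[OF bounded_linear_unvecm]]) (simp add: assms)
  then have "(vecm \<circ> (f \<circ> unvecm)) differentiable (at (vecm X))"
    by (rule differentiable_chain_at[OF _
          bounded_linear_imp_differentiable[OF bounded_linear_vecm]])
  then show ?thesis by (simp add: o_def)
qed

lemma spec_norm_le_norm: "spec_norm (A::real^'n^'m) \<le> norm A"
  unfolding spec_norm_def by (rule onorm_le) (simp add: norm_matrix_vector_mult_le)

lemma norm_le_sqrt_card_spec_norm: "norm (A::real^'n^'m) \<le> sqrt CARD('n) * spec_norm A"
proof -
  have "norm A ^ 2 = (\<Sum>j\<in>UNIV. norm (column j A) ^ 2)"
    unfolding norm_matrix_squared by (subst sum.swap) (simp add: norm_vec_squared column_def)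
  also have "\<dots> \<le> (\<Sum>j\<in>(UNIV::'n set). spec_norm A ^ 2)"
    by (intro sum_mono power_mono) (simp_all add: spec_norm_def norm_column_le_onorm)
  also have "\<dots> = (sqrt CARD('n) * spec_norm A) ^ 2" by (simp add: power_mult_distrib)
  finally show ?thesis
    by (rule power2_le_imp_le)
      (simp add: spec_norm_def onorm_pos_le matrix_vector_mul_bounded_linear)
qed

lemma spec_norm_matrix_mult_le:
  "spec_norm ((A::real^'n^'m) ** (B::real^'k^'n)) \<le> spec_norm A * spec_norm B"
proof -
  have "(\<lambda>x. (A ** B) *v x) = (\<lambda>x. A *v x) \<circ> (\<lambda>x. B *v x)"
    by (simp add: fun_eq_iff matrix_vector_mul_assoc)
  then show ?thesis
    unfolding spec_norm_def by (simp add: onorm_compose matrix_vector_mul_bounded_linear)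
qed

lemma spec_norm_jacobian_le_lipschitz:
  assumes "f differentiable (at x)" and "0 < d" and "L-lipschitz_on (ball x d) f"
  shows "spec_norm (jacobian f (at x)) \<le> L"
  unfolding spec_norm_def
  by (rule onorm_derivative_le_lipschitz[OF jacobian_works[THEN iffD1, OF assms(1)] assms(2,3)])

lemma norm_kron: "norm (kron (A::real^'b^'a) (B::real^'d^'c)) = norm A * norm B"
proof -
  have "norm (kron A B) ^ 2 = (norm A * norm B) ^ 2"
    by (simp add: norm_matrix_squared kron_def sum_UNIV_prod power_mult_distrib sum_product)
  then show ?thesis by (simp add: power2_eq_iff_nonneg)
qed

lemma spec_norm_transpose_kron_mat_1_le:
  "spec_norm (transpose (kron P (mat 1 :: real^'n^'n))) \<le> sqrt CARD('n) * norm (P::real^'b^'a)"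
  using spec_norm_le_norm[of "transpose (kron P (mat 1 :: real^'n^'n))"]
  by (simp add: norm_transpose norm_kron norm_orthonormal_columns mult.commute)

lemma norm_mult_orthonormal_factors_le:
  assumes "transpose V ** V = mat 1" and "W ** transpose W = mat 1"
  shows "norm ((X::real^'n^'m) ** (V::real^'k^'n) ** (W::real^'l^'k)) \<le> CARD('k) * norm X"
proof -
  have "norm (X ** V ** W) \<le> norm X * norm V * norm W"
    by (rule order_trans[OF norm_matrix_mult_le
          mult_right_mono[OF norm_matrix_mult_le norm_ge_zero]])
  also have "\<dots> = CARD('k) * norm X"
    using norm_orthonormal_columns[OF assms(1)] norm_orthonormal_columns[of "transpose W"] assms(2)
    by (simp add: norm_transpose mult.assoc mult.commute)
  finally show ?thesis .
qed

lemma spec_norm_jacobian_vectorised_le: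
  assumes "f differentiable (at X)" and "L-lipschitz_on (cball 0 \<rho>) f" and "norm X + 1 \<le> \<rho>"
  shows "spec_norm (jacobian (\<lambda>v. vecm (f (unvecm v))) (at (vecm X))) \<le> L"
proof (rule spec_norm_jacobian_le_lipschitz[OF differentiable_vectorised[OF assms(1)]
      zero_less_one])
  have "ball (vecm X) 1 \<subseteq> unvecm -` cball 0 \<rho>"
  proof
    fix v assume "v \<in> ball (vecm X) 1"
    then have "norm (unvecm v - X) < 1"
      using dist_unvecm[of "vecm X" v] by (simp add: dist_norm norm_minus_commute)
    then show "v \<in> unvecm -` cball 0 \<rho>"
      using assms(3) norm_triangle_sub[of "unvecm v" X] by simp
  qed
  then show "L-lipschitz_on (ball (vecm X) 1) (\<lambda>v. vecm (f (unvecm v)))"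
    by (rule lipschitz_on_subset[OF lipschitz_on_vectorised[OF assms(2)]])
qed

lemma spec_norm_OSA_J1_le:
  fixes WV :: "real^'v::finite^'d" and X :: "real^'d^'N"
  assumes "transpose WV ** WV = mat 1" and "WO ** transpose WO = mat 1"
  shows "spec_norm (OSA_J1 \<epsilon> K \<alpha> WQ WK WV WO X)
    \<le> sqrt CARD('N) * CARD('v) * norm X
      * spec_norm (jacobian (\<lambda>v. vecm (OSA_A \<epsilon> K \<alpha> WQ WK (unvecm v))) (at (vecm X)))"
proof -
  have "spec_norm (transpose (kron (X ** WV ** WO) (mat 1 :: real^'N^'N)))
      \<le> sqrt CARD('N) * (CARD('v) * norm X)"
    using norm_mult_orthonormal_factors_le[OF assms, of X]
    by (intro order_trans[OF spec_norm_transpose_kron_mat_1_le] mult_left_mono) simp_all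
  then show ?thesis
    unfolding OSA_J1_def
    by (intro order_trans[OF spec_norm_matrix_mult_le] mult_right_mono)
      (simp_all add: spec_norm_def onorm_pos_le matrix_vector_mul_bounded_linear mult.assoc)
qed

lemma spec_norm_jacobian_OSA_A_le:
  assumes "0 < \<epsilon>" and "0 \<le> r"
  obtains c where "0 \<le> c"
    and "\<And>(WQ::real^'v::finite^'d) WK \<alpha> (X::real^'d^'N).
      transpose (hcat WQ WK) ** hcat WQ WK = mat 1 \<Longrightarrow> 0 < \<alpha> \<Longrightarrow> norm X \<le> r \<Longrightarrow>
      X ** hcat WQ WK \<noteq> 0 \<Longrightarrow>
      spec_norm (jacobian (\<lambda>v. vecm (OSA_A \<epsilon> K \<alpha> WQ WK (unvecm v))) (at (vecm X))) \<le> \<alpha> * c"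
proof -
  obtain c where "0 \<le> c"
    and lip: "\<And>(WQ::real^'v^'d) WK \<alpha>. transpose (hcat WQ WK) ** hcat WQ WK = mat 1 \<Longrightarrow> 0 < \<alpha> \<Longrightarrow>
      (\<alpha> * c)-lipschitz_on (cball 0 (r + 1)) (OSA_A \<epsilon> K \<alpha> WQ WK :: real^'d^'N \<Rightarrow> _)"
    using lipschitz_on_OSA_A[OF assms(1), of "r + 1", where K = K] assms(2) by auto
  moreover have
    "spec_norm (jacobian (\<lambda>v. vecm (OSA_A \<epsilon> K \<alpha> WQ WK (unvecm v))) (at (vecm X))) \<le> \<alpha> * c"
    if "transpose (hcat WQ WK) ** hcat WQ WK = mat 1" and "0 < \<alpha>" and "norm X \<le> r"
      and "X ** hcat WQ WK \<noteq> 0" for WQ WK :: "real^'v^'d" and \<alpha> and X :: "real^'d^'N"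
    using that
    by (intro spec_norm_jacobian_vectorised_le[where \<rho> = "r + 1"] differentiable_OSA_A assms(1) lip)
      auto
  ultimately show ?thesis using that by blast
qed

theorem theorem6:
  fixes \<epsilon> R :: real and K :: nat
  assumes "2 * CARD('v::finite) \<le> CARD('d::finite)"
    and "2 * CARD('v) \<le> CARD('N::finite)"
    and "\<epsilon> > 0" and "R > 0"
  shows "\<exists>C > 0. \<forall>(WQ :: real^'v^'d) (WK :: real^'v^'d) (WV :: real^'v^'d) (WO :: real^'d^'v)
            (\<alpha> :: real) (X :: real^'d^'N).
     transpose (hcat WQ WK) ** hcat WQ WK = mat 1 \<longrightarrow>
     transpose WV ** WV = mat 1 \<longrightarrow>
     WO ** transpose WO = mat 1 \<longrightarrow>
     \<alpha> > 0 \<longrightarrow> spec_norm X \<le> R \<longrightarrow> hcat (X ** WQ) (X ** WK) \<noteq> 0 \<longrightarrow>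
     (\<lambda>v. vecm (OSA_A \<epsilon> K \<alpha> WQ WK (unvecm v))) differentiable (at (vecm X)) \<and>
     spec_norm (OSA_J1 \<epsilon> K \<alpha> WQ WK WV WO X) \<le> C * \<alpha>"
proof -
  obtain c where "0 \<le> c"
    and J: "\<And>(WQ::real^'v^'d) WK \<alpha> (X::real^'d^'N).
      transpose (hcat WQ WK) ** hcat WQ WK = mat 1 \<Longrightarrow> 0 < \<alpha> \<Longrightarrow>
      norm X \<le> sqrt CARD('d) * R \<Longrightarrow> X ** hcat WQ WK \<noteq> 0 \<Longrightarrow>
      spec_norm (jacobian (\<lambda>v. vecm (OSA_A \<epsilon> K \<alpha> WQ WK (unvecm v))) (at (vecm X))) \<le> \<alpha> * c"
    using spec_norm_jacobian_OSA_A_le[OF \<open>\<epsilon> > 0\<close>, of "sqrt CARD('d) * R", where K = K] \<open>R > 0\<close>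
    by auto
  define C where "C = sqrt CARD('N) * CARD('v) * (sqrt CARD('d) * R) * c + 1"
  have "0 < C" using \<open>0 \<le> c\<close> \<open>R > 0\<close> by (simp add: C_def add_nonneg_pos)
  show ?thesis
  proof (intro exI[of _ C] conjI allI impI \<open>0 < C\<close>)
    fix WQ WK WV :: "real^'v^'d" and WO :: "real^'d^'v" and \<alpha> :: real and X :: "real^'d^'N"
    assume orth: "transpose (hcat WQ WK) ** hcat WQ WK = mat 1" and V: "transpose WV ** WV = mat 1"
      and O: "WO ** transpose WO = mat 1" and "0 < \<alpha>" and XR: "spec_norm X \<le> R"
      and "hcat (X ** WQ) (X ** WK) \<noteq> 0"
    then have nz: "X ** hcat WQ WK \<noteq> 0" by (simp add: hcat_matrix_mult)
    then show "(\<lambda>v. vecm (OSA_A \<epsilon> K \<alpha> WQ WK (unvecm v))) differentiable (at (vecm X))"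
      by (intro differentiable_vectorised differentiable_OSA_A \<open>\<epsilon> > 0\<close>)
    have nX: "norm X \<le> sqrt CARD('d) * R"
      using norm_le_sqrt_card_spec_norm[of X]
        mult_left_mono[OF XR real_sqrt_ge_zero[OF of_nat_0_le_iff]]
      by (meson order_trans)
    have "spec_norm (OSA_J1 \<epsilon> K \<alpha> WQ WK WV WO X) \<le> sqrt CARD('N) * CARD('v) * norm X * (\<alpha> * c)"
      using J[OF orth \<open>0 < \<alpha>\<close> nX nz]
      by (intro order_trans[OF spec_norm_OSA_J1_le[OF V O]] mult_left_mono) simp_all
    also have "\<dots> \<le> sqrt CARD('N) * CARD('v) * (sqrt CARD('d) * R) * (\<alpha> * c)"
      using nX \<open>0 < \<alpha>\<close> \<open>0 \<le> c\<close> by (intro mult_right_mono mult_left_mono) simp_all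
    also have "\<dots> \<le> C * \<alpha>"
      using \<open>0 < \<alpha>\<close> by (simp add: C_def algebra_simps)
    finally show "spec_norm (OSA_J1 \<epsilon> K \<alpha> WQ WK WV WO X) \<le> C * \<alpha>" .
  qed
qed

end
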